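(* Let $(\mathfrak{g},\theta)$ be a nilpotent symplectic Lie algebra over $\mathbb{R}$ and let $\nabla$ be the affine structure on $\mathfrak{g}$ associated to $\theta$, i.e. $\nabla(X,Y)$ is the unique vector with $\theta(\nabla(X,Y),Z)=-\theta(Y,[X,Z])$ for all $Z\in\mathfrak{g}$. Let $\widetilde{\mathfrak{g}}=\mathfrak{g}\oplus\mathbb{R}$ with bracket $[(X,\alpha),(Y,\lambda)]=([X,Y],\theta(X,Y))$. Let $\varphi$ be a bilinear form on $\mathfrak{g}$ with $\varphi(X,Y)-\varphi(Y,X)=\theta(X,Y)$, and let $\widetilde{\nabla}:\widetilde{\mathfrak{g}}\times\widetilde{\mathfrak{g}}\to\widetilde{\mathfrak{g}}$ be a bilinear map such that for all $X,Y\in\mathfrak{g}$, $\lambda\in\mathbb{R}$: $\widetilde{\nabla}((X,0),(Y,0))=(\nabla(X,Y),\varphi(X,Y))$ and $\widetilde{\nabla}((X,0),(0,\lambda))=\widetilde{\nabla}((0,\lambda),(X,0))$. Define, for $U,V,W\in\widetilde{\mathfrak{g}}$, $$C(U,V,W)=\widetilde{\nabla}(U,\widetilde{\nabla}(V,W))-\widetilde{\nabla}(V,\widetilde{\nabla}(U,W))-\widetilde{\nabla}([U,V],W).$$ If $C((X,0),(0,1),(Y,0))=0$ for all $X,Y\in\mathfrak{g}$, then $C((X,0),(Y,0),(0,1))=0$ for all $X,Y\in\mathfrak{g}$.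
   Context: A symplectic Lie algebra is a Lie algebra with a nondegenerate skew-symmetric bilinear form $\theta$ satisfying $\theta([X,Y],Z)+\theta([Y,Z],X)+\theta([Z,X],Y)=0$. An affine structure on a Lie algebra $\mathfrak{h}$ is a bilinear map $\nabla$ with $\nabla(X,Y)-\nabla(Y,X)=[X,Y]$ and $\nabla(X,\nabla(Y,Z))-\nabla(Y,\nabla(X,Z))=\nabla([X,Y],Z)$ for all $X,Y,Z$; the map $\nabla$ defined from $\theta$ in the claim is such a structure. *)

theory Defs
  imports "HOL-Analysis.Analysis"
begin

definition lie_algebra :: "('a::euclidean_space \<Rightarrow> 'a \<Rightarrow> 'a) \<Rightarrow> bool" where
  "lie_algebra br \<longleftrightarrow> bilinear br \<and> (\<forall>x. br x x = 0) \<and>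
     (\<forall>x y z. br x (br y z) + br y (br z x) + br z (br x y) = 0)"

fun lower_central :: "('a::euclidean_space \<Rightarrow> 'a \<Rightarrow> 'a) \<Rightarrow> nat \<Rightarrow> 'a set" where
  "lower_central br 0 = UNIV"
| "lower_central br (Suc k) = span {br x y | x y. y \<in> lower_central br k}"

definition nilpotent_lie :: "('a::euclidean_space \<Rightarrow> 'a \<Rightarrow> 'a) \<Rightarrow> bool" where
  "nilpotent_lie br \<longleftrightarrow> lie_algebra br \<and> (\<exists>k. lower_central br k = {0})"

definition symplectic_form :: "('a::euclidean_space \<Rightarrow> 'a \<Rightarrow> 'a) \<Rightarrow> ('a \<Rightarrow> 'a \<Rightarrow> real) \<Rightarrow> bool" where
  "symplectic_form br \<theta> \<longleftrightarrow> bilinear \<theta> \<and> (\<forall>x y. \<theta> x y = - \<theta> y x) \<and>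
     (\<forall>x. (\<forall>y. \<theta> x y = 0) \<longrightarrow> x = 0) \<and>
     (\<forall>x y z. \<theta> (br x y) z + \<theta> (br y z) x + \<theta> (br z x) y = 0)"

definition ext_bracket :: "('a \<Rightarrow> 'a \<Rightarrow> 'a) \<Rightarrow> ('a \<Rightarrow> 'a \<Rightarrow> real) \<Rightarrow> ('a \<times> real) \<Rightarrow> ('a \<times> real) \<Rightarrow> ('a \<times> real)" where
  "ext_bracket br \<theta> u v = (br (fst u) (fst v), \<theta> (fst u) (fst v))"

definition curv :: "('b::real_vector \<Rightarrow> 'b \<Rightarrow> 'b) \<Rightarrow> ('b \<Rightarrow> 'b \<Rightarrow> 'b) \<Rightarrow> 'b \<Rightarrow> 'b \<Rightarrow> 'b \<Rightarrow> 'b" where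
  "curv N brk u v w = N u (N v w) - N v (N u w) - N (brk u v) w"

end

theory Submission
  imports Defs
begin

text \<open>Write \<open>e = (0, 1)\<close>. By bilinearity \<open>N e w = N w e\<close> for every \<open>w\<close>, and as \<open>e\<close> is
  central the hypothesis \<open>C((X,0), e, (Y,0)) = 0\<close> says that \<open>N e\<close> commutes with \<open>N (X,0)\<close>.
  Hence \<open>C((X,0), (Y,0), e)\<close> is \<open>N e\<close> applied to the torsion of \<open>N\<close> at \<open>(X,0), (Y,0)\<close>.
  That torsion vanishes: \<open>\<nabla>\<close> is torsion free by the cocycle identity and nondegeneracy of
  \<open>\<theta>\<close>, and the skew part of \<open>\<phi>\<close> is \<open>\<theta>\<close>.\<close>

lemma bilinear_alternating_skew:
  assumes "bilinear f" "\<And>x. f x x = 0"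
  shows "f y x = - f x y"
proof -
  have "0 = f (x + y) (x + y)" using assms(2) by simp
  also have "\<dots> = f x x + f x y + f y x + f y y"
    using assms(1) by (simp add: bilinear_ladd bilinear_radd algebra_simps)
  finally show ?thesis using assms(2) by (simp add: eq_neg_iff_add_eq_0 add.commute)
qed

lemma symplectic_connection_torsion_free:
  assumes lie: "lie_algebra br"
    and sympl: "symplectic_form br \<theta>"
    and nabla: "\<And>X Y Z. \<theta> (nabla X Y) Z = - \<theta> Y (br X Z)"
  shows "nabla X Y - nabla Y X = br X Y"
proof -
  have br_bil: "bilinear br" and br_alt: "\<And>x. br x x = 0"
    using lie unfolding lie_algebra_def by blast+
  have th_bil: "bilinear \<theta>" and th_skew: "\<And>x y. \<theta> x y = - \<theta> y x"
    and th_nondeg: "\<And>x. (\<forall>y. \<theta> x y = 0) \<Longrightarrow> x = 0"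
    and th_cocycle: "\<And>x y z. \<theta> (br x y) z + \<theta> (br y z) x + \<theta> (br z x) y = 0"
    using sympl unfolding symplectic_form_def by blast+
  have "\<theta> (nabla X Y - nabla Y X - br X Y) Z = 0" for Z
  proof -
    have "\<theta> (nabla X Y - nabla Y X - br X Y) Z
        = - \<theta> Y (br X Z) + \<theta> X (br Y Z) - \<theta> (br X Y) Z"
      using th_bil nabla by (simp add: bilinear_lsub)
    also have "\<dots> = - (\<theta> (br X Y) Z + \<theta> (br Y Z) X + \<theta> (br Z X) Y)"
      using th_skew[of "br Y Z" X] th_skew[of Y "br X Z"]
        bilinear_alternating_skew[OF br_bil br_alt, of X Z] bilinear_lneg[OF th_bil, of "br X Z" Y]
      by simp
    finally show ?thesis using th_cocycle by simp
  qed
  then show ?thesis using th_nondeg by (metis eq_iff_diff_eq_0)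
qed

lemma ext_bracket_right_center:
  assumes "bilinear br" "bilinear \<theta>"
  shows "ext_bracket br \<theta> u (0, l) = 0"
  using assms unfolding ext_bracket_def by (simp add: bilinear_rzero zero_prod_def)

lemma bilinear_prod_commute_center:
  fixes N :: "'a::real_vector \<times> real \<Rightarrow> 'a \<times> real \<Rightarrow> 'a \<times> real"
  assumes N_bil: "bilinear N" and N_comm: "\<And>X. N (X, 0) (0, 1) = N (0, 1) (X, 0)"
  shows "N (0, 1) w = N w (0, 1)"
proof -
  let ?e = "(0::'a, 1::real)"
  define W a where "W = fst w" and "a = snd w"
  have w: "w = (W, 0) + a *\<^sub>R ?e" by (simp add: W_def a_def)
  have "N ?e w = N ?e (W, 0) + a *\<^sub>R N ?e ?e"
    unfolding w using N_bil by (simp only: bilinear_radd bilinear_rmul)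
  also have "\<dots> = N (W, 0) ?e + a *\<^sub>R N ?e ?e" using N_comm by simp
  also have "\<dots> = N w ?e"
    unfolding w using N_bil by (simp only: bilinear_ladd bilinear_lmul)
  finally show ?thesis .
qed

lemma curv_central_eq_torsion:
  fixes N :: "'b::real_vector \<Rightarrow> 'b \<Rightarrow> 'b"
  assumes N_bil: "bilinear N"
    and e_comm: "\<And>w. N e w = N w e"
    and brk_ue: "brk u e = 0" and brk_ve: "brk v e = 0"
    and flat_u: "curv N brk u e v = 0" and flat_v: "curv N brk v e u = 0"
  shows "curv N brk u v e = N e (N u v - N v u - brk u v)"
proof -
  have N0: "N 0 w = 0" for w using N_bil by (rule bilinear_lzero)
  have swap_u: "N u (N e v) = N e (N u v)" and swap_v: "N v (N e u) = N e (N v u)"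
    using flat_u flat_v unfolding curv_def brk_ue brk_ve N0 by simp_all
  have "curv N brk u v e = N u (N e v) - N v (N e u) - N e (brk u v)"
    unfolding curv_def e_comm ..
  also have "\<dots> = N e (N u v - N v u - brk u v)"
    unfolding swap_u swap_v using N_bil by (simp add: bilinear_rsub)
  finally show ?thesis .
qed

theorem mainTheorem3:
  fixes br :: "'a::euclidean_space \<Rightarrow> 'a \<Rightarrow> 'a"
    and \<theta> :: "'a \<Rightarrow> 'a \<Rightarrow> real"
    and nabla :: "'a \<Rightarrow> 'a \<Rightarrow> 'a"
    and \<phi> :: "'a \<Rightarrow> 'a \<Rightarrow> real"
    and N :: "'a \<times> real \<Rightarrow> 'a \<times> real \<Rightarrow> 'a \<times> real"
  assumes nil: "nilpotent_lie br"
    and sympl: "symplectic_form br \<theta>"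
    and nabla_def: "\<And>X Y Z. \<theta> (nabla X Y) Z = - \<theta> Y (br X Z)"
    and phi_bil: "bilinear \<phi>"
    and phi_skew: "\<And>X Y. \<phi> X Y - \<phi> Y X = \<theta> X Y"
    and N_bil: "bilinear N"
    and N_gg: "\<And>X Y. N (X, 0) (Y, 0) = (nabla X Y, \<phi> X Y)"
    and N_comm: "\<And>X l. N (X, 0) (0, l) = N (0, l) (X, 0)"
    and hyp: "\<And>X Y. curv N (ext_bracket br \<theta>) (X, 0) (0, 1) (Y, 0) = 0"
  shows "\<forall>X Y. curv N (ext_bracket br \<theta>) (X, 0) (Y, 0) (0, 1) = 0"
proof (intro allI)
  fix X Y :: 'a
  have lie: "lie_algebra br" using nil unfolding nilpotent_lie_def by blast
  have "bilinear br" "bilinear \<theta>"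
    using lie sympl unfolding lie_algebra_def symplectic_form_def by blast+
  then have center: "ext_bracket br \<theta> u (0, 1) = 0" for u
    by (rule ext_bracket_right_center)
  have torsion: "N (X, 0) (Y, 0) - N (Y, 0) (X, 0) - ext_bracket br \<theta> (X, 0) (Y, 0) = 0"
    using symplectic_connection_torsion_free[where nabla = nabla, OF lie sympl nabla_def]
      phi_skew[of X Y]
    unfolding N_gg ext_bracket_def by (simp add: zero_prod_def)
  have "curv N (ext_bracket br \<theta>) (X, 0) (Y, 0) (0, 1)
      = N (0, 1) (N (X, 0) (Y, 0) - N (Y, 0) (X, 0) - ext_bracket br \<theta> (X, 0) (Y, 0))"
    by (rule curv_central_eq_torsion[OF N_bil bilinear_prod_commute_center[OF N_bil N_comm]
          center center hyp hyp])
  also have "\<dots> = 0"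
    unfolding torsion by (rule bilinear_rzero[OF N_bil])
  finally show "curv N (ext_bracket br \<theta>) (X, 0) (Y, 0) (0, 1) = 0" .
qed

end
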